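(* Consider an asymptotic regime indexed by the sample size $n\to\infty$, with $p=p_n>n$. Let $X=(X_1,\dots,X_p)\in\mathbb{R}^{n\times p}$ be a random design matrix, and suppose: (A1) (general position) with probability one, for any $k<\min\{n,p\}$, any indices $i_1,\dots,i_{k+1}$ and any signs $\sigma_1,\dots,\sigma_{k+1}\in\{-1,1\}$, the affine span of $\sigma_1X_{i_1},\dots,\sigma_{k+1}X_{i_{k+1}}$ contains no element of $\{\pm X_i: i\neq i_1,\dots,i_{k+1}\}$; (A2) there are positive constants $C_{\min}$ and $K$ (with $n$ divisible by $K$) such that $\lim_{n\to\infty}P\big(\phi_{\min}(n/K)\ge C_{\min}\big)=1$; (A3) there is a positive constant $C_{\max}$ such that $\lim_{n\to\infty}P\big(\phi_{\max}(n)\le C_{\max}\big)=1$. Let the node-wise Lasso tuning parameter satisfy $\lambda_1\ge C_1/\sqrt{n}$ for some constant $C_1>0$. Then $$\lim_{n\to\infty}P\left(\frac{1}{\tilde\tau_1^2}\le \frac{1}{C_{\min}}+\frac{C_{\max}K}{C_1^2}\right)=1.$$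
   Context: For $s\ge1$, the restricted maximum and minimum eigenvalues are $\phi_{\max}(s)=\max_{1\le\|z\|_0\le s}\frac{\|Xz\|^2}{n\|z\|^2}$ and $\phi_{\min}(s)=\min_{1\le\|z\|_0\le s}\frac{\|Xz\|^2}{n\|z\|^2}$. Let $X_{-1}$ be $X$ with the first column removed. The node-wise Lasso is $\hat\gamma_1=\arg\min_{\gamma\in\mathbb{R}^{p-1}}\frac1n\|X_1-X_{-1}\gamma\|^2+2\lambda_1\|\gamma\|_1$, and $\tilde\tau_1^2=\frac1n\|X_1-X_{-1}\hat\gamma_1\|^2$. *)

theory Defs
  imports "HOL-Probability.Probability"
begin

text \<open>An n x p design matrix is a function X :: nat => nat => real, X r j being the entry
  in row r < n and column j < p. Columns are 0-indexed, so the paper's first column X_1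
  is column 0. Vectors z in R^p are functions nat => real vanishing outside {..<p}.\<close>

definition Xmul :: "nat \<Rightarrow> (nat \<Rightarrow> nat \<Rightarrow> real) \<Rightarrow> (nat \<Rightarrow> real) \<Rightarrow> nat \<Rightarrow> real" where
  "Xmul p X z r = (\<Sum>j<p. X r j * z j)"

definition sqnorm :: "nat \<Rightarrow> (nat \<Rightarrow> real) \<Rightarrow> real" where
  "sqnorm m v = (\<Sum>r<m. (v r)^2)"

definition l0norm :: "nat \<Rightarrow> (nat \<Rightarrow> real) \<Rightarrow> nat" where
  "l0norm p z = card {j. j < p \<and> z j \<noteq> 0}"

definition sparse_vecs :: "nat \<Rightarrow> nat \<Rightarrow> (nat \<Rightarrow> real) set" where
  "sparse_vecs p s = {z. (\<forall>j\<ge>p. z j = 0) \<and> 1 \<le> l0norm p z \<and> l0norm p z \<le> s}"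

definition rayleigh :: "nat \<Rightarrow> nat \<Rightarrow> (nat \<Rightarrow> nat \<Rightarrow> real) \<Rightarrow> (nat \<Rightarrow> real) \<Rightarrow> real" where
  "rayleigh n p X z = sqnorm n (Xmul p X z) / (real n * sqnorm p z)"

definition phi_max :: "nat \<Rightarrow> nat \<Rightarrow> (nat \<Rightarrow> nat \<Rightarrow> real) \<Rightarrow> nat \<Rightarrow> real" where
  "phi_max n p X s = (SUP z \<in> sparse_vecs p s. rayleigh n p X z)"

definition phi_min :: "nat \<Rightarrow> nat \<Rightarrow> (nat \<Rightarrow> nat \<Rightarrow> real) \<Rightarrow> nat \<Rightarrow> real" where
  "phi_min n p X s = (INF z \<in> sparse_vecs p s. rayleigh n p X z)"

definition general_position :: "nat \<Rightarrow> nat \<Rightarrow> (nat \<Rightarrow> nat \<Rightarrow> real) \<Rightarrow> bool" where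
  "general_position n p X \<longleftrightarrow>
     (\<forall>k idx sg. k < min n p \<longrightarrow> (\<forall>j\<le>k. idx j < p) \<longrightarrow> (\<forall>j\<le>k. sg j \<in> {-1, 1::real}) \<longrightarrow>
        \<not> (\<exists>i<p. i \<notin> idx ` {..k} \<and> (\<exists>s\<in>{-1, 1::real}. \<exists>c :: nat \<Rightarrow> real.
              (\<Sum>j\<le>k. c j) = 1 \<and> (\<forall>r<n. s * X r i = (\<Sum>j\<le>k. c j * (sg j * X r (idx j)))))))"

text \<open>Node-wise Lasso objective for column 0 regressed on columns 1..p-1
  (gamma is indexed by the column it multiplies, only gamma 1..p-1 matter).\<close>
definition nw_resid :: "nat \<Rightarrow> nat \<Rightarrow> (nat \<Rightarrow> nat \<Rightarrow> real) \<Rightarrow> (nat \<Rightarrow> real) \<Rightarrow> real" where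
  "nw_resid n p X g = sqnorm n (\<lambda>r. X r 0 - (\<Sum>j\<in>{1..<p}. X r j * g j)) / real n"

definition nw_lasso_obj :: "nat \<Rightarrow> nat \<Rightarrow> (nat \<Rightarrow> nat \<Rightarrow> real) \<Rightarrow> real \<Rightarrow> (nat \<Rightarrow> real) \<Rightarrow> real" where
  "nw_lasso_obj n p X lam g = nw_resid n p X g + 2 * lam * (\<Sum>j\<in>{1..<p}. \<bar>g j\<bar>)"

definition nw_lasso_min :: "nat \<Rightarrow> nat \<Rightarrow> (nat \<Rightarrow> nat \<Rightarrow> real) \<Rightarrow> real \<Rightarrow> (nat \<Rightarrow> real) \<Rightarrow> bool" where
  "nw_lasso_min n p X lam g \<longleftrightarrow> (\<forall>h. nw_lasso_obj n p X lam g \<le> nw_lasso_obj n p X lam h)"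

text \<open>Inner probability of a (possibly non-measurable) event; equals the probability for
  measurable events.\<close>
definition inner_prob :: "'a measure \<Rightarrow> 'a set \<Rightarrow> real" where
  "inner_prob M S = (SUP A \<in> {A. A \<in> sets M \<and> A \<subseteq> S}. measure M A)"

end

theory Submission
  imports Defs
begin

text \<open>Let \<open>R = X\<^sub>1 - X\<^sub>-\<^sub>1 \<gamma>\<close> be the residual of a node-wise Lasso minimiser \<open>\<gamma>\<close>, \<open>S\<close> the
  support of \<open>\<gamma>\<close> and \<open>m = n/K\<close>, so that \<open>\<tau>\<^sup>2 = |R|\<^sup>2/n\<close>. If \<open>|S| < m\<close>, the vector \<open>z = (1, -\<gamma>)\<close>
  is \<open>m\<close>-sparse with \<open>X z = R\<close> and \<open>|z| \<ge> 1\<close>, hence \<open>\<tau>\<^sup>2 \<ge> phi_min(m)\<close>. Otherwise stationarity gives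
  \<open>|X\<^sub>j\<^sup>T R| = n \<lambda>\<close> on \<open>S\<close>; for \<open>T \<subseteq> S\<close> with \<open>|T| = m\<close> and \<open>u = (X\<^sub>j\<^sup>T R)\<close> restricted to \<open>T\<close>
  one has \<open>\<langle>R, X u\<rangle> = |u|\<^sup>2 = m (n \<lambda>)\<^sup>2\<close>, and Cauchy-Schwarz with \<open>|X u|\<^sup>2 \<le> n phi_max(n) |u|\<^sup>2\<close>
  gives \<open>m \<lambda>\<^sup>2 \<le> phi_max(n) \<tau>\<^sup>2\<close>, i.e. \<open>\<tau>\<^sup>2 \<ge> C\<^sub>1\<^sup>2 / (K C_max)\<close>. So the bound holds for every
  minimiser on the intersection of the events of (A2) and (A3), whose inner probability tends
  to 1.\<close>

lemma sqnorm_nonneg: "0 \<le> sqnorm m v"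
  unfolding sqnorm_def by (rule sum_nonneg) simp

lemma rayleigh_nonneg: "0 \<le> rayleigh n p X z"
  unfolding rayleigh_def by (simp add: sqnorm_nonneg)

lemma sqnorm_Xmul_le_frobenius: "sqnorm n (Xmul p X z) \<le> (\<Sum>r<n. \<Sum>j<p. (X r j)^2) * sqnorm p z"
proof -
  have "sqnorm n (Xmul p X z) \<le> (\<Sum>r<n. (\<Sum>j<p. (X r j)^2) * (\<Sum>j<p. (z j)^2))"
    unfolding sqnorm_def Xmul_def by (rule sum_mono) (rule Cauchy_Schwarz_ineq_sum)
  thus ?thesis unfolding sqnorm_def by (simp add: sum_distrib_right)
qed

lemma rayleigh_le_frobenius: "rayleigh n p X z \<le> (\<Sum>r<n. \<Sum>j<p. (X r j)^2) / real n"
proof (cases "real n * sqnorm p z = 0")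
  case True
  hence "rayleigh n p X z = 0" unfolding rayleigh_def by simp
  thus ?thesis by (simp add: sum_nonneg)
next
  case False
  hence pos: "real n * sqnorm p z > 0" using sqnorm_nonneg[of p z] by simp
  have "rayleigh n p X z \<le> (\<Sum>r<n. \<Sum>j<p. (X r j)^2) * sqnorm p z / (real n * sqnorm p z)"
    unfolding rayleigh_def by (intro divide_right_mono) (use pos sqnorm_Xmul_le_frobenius in auto)
  thus ?thesis using pos by (simp add: zero_less_mult_iff)
qed

lemma rayleigh_le_phi_max: "z \<in> sparse_vecs p s \<Longrightarrow> rayleigh n p X z \<le> phi_max n p X s"
  unfolding phi_max_def
  by (rule cSUP_upper) (auto intro!: bdd_aboveI rayleigh_le_frobenius)

lemma phi_min_le_rayleigh: "z \<in> sparse_vecs p s \<Longrightarrow> phi_min n p X s \<le> rayleigh n p X z"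
  unfolding phi_min_def
  by (rule cINF_lower) (auto intro!: bdd_belowI[where m=0] rayleigh_nonneg)

lemma sqnorm_pos_if_sparse:
  assumes "z \<in> sparse_vecs p s"
  shows "0 < sqnorm p z"
proof -
  have "{j. j < p \<and> z j \<noteq> 0} \<noteq> {}"
    using assms unfolding sparse_vecs_def l0norm_def by (auto simp: Suc_le_eq card_gt_0_iff)
  then obtain j where "j < p" "z j \<noteq> 0" by blast
  thus ?thesis unfolding sqnorm_def by (intro sum_pos2[of _ j]) auto
qed

lemma sqnorm_Xmul_le_phi_max:
  assumes "n > 0" "z \<in> sparse_vecs p s"
  shows "sqnorm n (Xmul p X z) \<le> phi_max n p X s * (real n * sqnorm p z)"
  using rayleigh_le_phi_max[OF assms(2), of n X] sqnorm_pos_if_sparse[OF assms(2)] assms(1)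
  by (simp add: rayleigh_def pos_divide_le_eq)

lemma phi_min_le_sqnorm_Xmul:
  assumes "n > 0" "z \<in> sparse_vecs p s"
  shows "phi_min n p X s * (real n * sqnorm p z) \<le> sqnorm n (Xmul p X z)"
  using phi_min_le_rayleigh[OF assms(2), of n X] sqnorm_pos_if_sparse[OF assms(2)] assms(1)
  by (simp add: rayleigh_def pos_le_divide_eq)

lemma sum_mult_Xmul: "(\<Sum>r<n. v r * Xmul p X u r) = (\<Sum>j<p. u j * (\<Sum>r<n. X r j * v r))"
proof -
  have "(\<Sum>r<n. v r * Xmul p X u r) = (\<Sum>r<n. \<Sum>j<p. u j * (X r j * v r))"
    unfolding Xmul_def by (simp add: sum_distrib_left mult_ac)
  also have "\<dots> = (\<Sum>j<p. u j * (\<Sum>r<n. X r j * v r))"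
    by (subst sum.swap) (simp add: sum_distrib_left)
  finally show ?thesis .
qed

definition nw_residual :: "nat \<Rightarrow> (nat \<Rightarrow> nat \<Rightarrow> real) \<Rightarrow> (nat \<Rightarrow> real) \<Rightarrow> nat \<Rightarrow> real" where
  "nw_residual p X g r = X r 0 - (\<Sum>i\<in>{1..<p}. X r i * g i)"

lemma nw_resid_eq: "nw_resid n p X g = sqnorm n (nw_residual p X g) / real n"
  unfolding nw_resid_def nw_residual_def ..

lemma nw_residual_update:
  assumes "j \<in> {1..<p}"
  shows "nw_residual p X (g(j := g j + t)) r = nw_residual p X g r - t * X r j"
proof -
  have "(\<Sum>i\<in>{1..<p}. X r i * (g(j := g j + t)) i) = (\<Sum>i\<in>{1..<p}. X r i * g i) + X r j * t"
    using assms by (simp add: sum.remove[of _ j] algebra_simps)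
  thus ?thesis unfolding nw_residual_def by (simp add: algebra_simps)
qed

lemma nw_resid_update:
  assumes "j \<in> {1..<p}"
  shows "nw_resid n p X (g(j := g j + t)) = nw_resid n p X g
           + (t^2 * (\<Sum>r<n. (X r j)^2) - 2 * t * (\<Sum>r<n. X r j * nw_residual p X g r)) / real n"
proof -
  have "(nw_residual p X g r - t * X r j)^2
        = (nw_residual p X g r)^2 + (t^2 * (X r j)^2 - 2 * t * (X r j * nw_residual p X g r))" for r
    by (simp add: power2_eq_square algebra_simps)
  thus ?thesis
    unfolding nw_resid_eq sqnorm_def nw_residual_update[OF assms]
    by (simp add: sum.distrib sum_subtractf sum_distrib_left add_divide_distrib)
qed

lemma sum_abs_update:
  fixes p :: nat and g :: "nat \<Rightarrow> real"
  assumes "j \<in> {1..<p}"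
  shows "(\<Sum>i\<in>{1..<p}. \<bar>(g(j := g j + t)) i\<bar>) = (\<Sum>i\<in>{1..<p}. \<bar>g i\<bar>) + (\<bar>g j + t\<bar> - \<bar>g j\<bar>)"
  using assms by (simp add: sum.remove[of _ j])

lemma nw_lasso_min_stationary:
  fixes X :: "nat \<Rightarrow> nat \<Rightarrow> real"
  assumes min: "nw_lasso_min n p X lam g" and j: "j \<in> {1..<p}" and gj: "g j \<noteq> 0" and n: "n > 0"
  shows "(\<Sum>r<n. X r j * nw_residual p X g r) = real n * lam * sgn (g j)"
proof -
  define a where "a = (\<Sum>r<n. X r j * nw_residual p X g r)"
  define b where "b = (\<Sum>r<n. (X r j)^2)"
  \<comment> \<open>For \<open>|t| < |g j|\<close> the penalty is linear in \<open>t\<close>, so \<open>f\<close> is the objective along coordinate \<open>j\<close>.\<close>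
  define f where "f t = nw_lasso_obj n p X lam g + (t^2 * b - 2 * t * a) / real n + 2 * lam * (sgn (g j) * t)"
    for t
  have f_eq: "f t = nw_lasso_obj n p X lam (g(j := g j + t))" if "\<bar>0 - t\<bar> < \<bar>g j\<bar>" for t
  proof -
    have "\<bar>g j + t\<bar> - \<bar>g j\<bar> = sgn (g j) * t" using that gj by (auto simp: abs_if sgn_if)
    thus ?thesis
      unfolding f_def nw_lasso_obj_def nw_resid_update[OF j] sum_abs_update[OF j] a_def b_def
      by (simp add: algebra_simps)
  qed
  have deriv: "DERIV f 0 :> (- 2 * a / real n + 2 * lam * sgn (g j))"
    unfolding f_def using n by (auto intro!: derivative_eq_intros)
  have local_min: "\<forall>t. \<bar>0 - t\<bar> < \<bar>g j\<bar> \<longrightarrow> f 0 \<le> f t"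
    using min f_eq unfolding nw_lasso_min_def by (simp add: f_def)
  have "- 2 * a / real n + 2 * lam * sgn (g j) = 0"
    using DERIV_local_min[OF deriv _ local_min] gj by simp
  thus ?thesis using n by (simp add: a_def field_simps)
qed

lemma phi_min_le_nw_resid:
  fixes X :: "nat \<Rightarrow> nat \<Rightarrow> real"
  assumes n: "n > 0" and p: "p > 0" and supp: "card {j \<in> {1..<p}. g j \<noteq> 0} < s"
  shows "phi_min n p X s \<le> nw_resid n p X g"
proof -
  define z where "z j = (if j = 0 then 1 else if j < p then - g j else 0)" for j
  have Xz: "Xmul p X z = nw_residual p X g"
  proof
    fix r
    have "{..<p} = insert 0 {1..<p}" using p by auto
    thus "Xmul p X z r = nw_residual p X g r"
      unfolding Xmul_def nw_residual_def by (simp add: z_def sum_negf)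
  qed
  have "{j. j < p \<and> z j \<noteq> 0} = insert 0 {j \<in> {1..<p}. g j \<noteq> 0}"
    using p by (auto simp: z_def)
  hence "l0norm p z = card {j \<in> {1..<p}. g j \<noteq> 0} + 1"
    unfolding l0norm_def by simp
  hence z_sparse: "z \<in> sparse_vecs p s"
    using supp p unfolding sparse_vecs_def by (simp add: z_def)
  have z_ge_1: "1 \<le> sqnorm p z"
    using member_le_sum[of 0 "{..<p}" "\<lambda>j. (z j)^2"] p unfolding sqnorm_def by (simp add: z_def)
  show ?thesis
  proof (cases "phi_min n p X s \<le> 0")
    case True
    thus ?thesis unfolding nw_resid_eq by (simp add: sqnorm_nonneg order_trans)
  next
    case False
    have "phi_min n p X s * real n \<le> phi_min n p X s * (real n * sqnorm p z)"
      using False z_ge_1 by (intro mult_left_mono) (auto intro: mult_le_cancel_left1[THEN iffD2])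
    also have "\<dots> \<le> sqnorm n (nw_residual p X g)"
      using phi_min_le_sqnorm_Xmul[OF n z_sparse, where X=X] unfolding Xz .
    finally show ?thesis unfolding nw_resid_eq using n by (simp add: pos_le_divide_eq)
  qed
qed

lemma card_mult_sq_le_phi_max_mult_nw_resid:
  fixes X :: "nat \<Rightarrow> nat \<Rightarrow> real"
  assumes min: "nw_lasso_min n p X lam g" and n: "n > 0" and lam: "lam > 0"
    and T: "T \<subseteq> {j \<in> {1..<p}. g j \<noteq> 0}" "T \<noteq> {}" "card T \<le> s"
  shows "real (card T) * lam^2 \<le> phi_max n p X s * nw_resid n p X g"
proof -
  define R where "R = nw_residual p X g"
  define a where "a j = (\<Sum>r<n. X r j * R r)" for j
  define u where "u j = (if j \<in> T then a j else 0)" for j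
  define Q where "Q = real (card T) * (real n * lam)^2"
  have Tp: "T \<subseteq> {..<p}" using T(1) by auto
  hence finT: "finite T" by (rule finite_subset) simp
  have a_sq: "(a j)^2 = (real n * lam)^2" if "j \<in> T" for j
    using nw_lasso_min_stationary[OF min _ _ n, of j] that T(1)
    by (auto simp: a_def R_def power_mult_distrib sgn_if)
  have "a j \<noteq> 0" if "j \<in> T" for j
    using a_sq[OF that] n lam by auto
  hence "{j. j < p \<and> u j \<noteq> 0} = T"
    using Tp by (auto simp: u_def)
  hence "l0norm p u = card T" unfolding l0norm_def by simp
  hence u_sparse: "u \<in> sparse_vecs p s"
    using T finT Tp unfolding sparse_vecs_def by (auto simp: u_def Suc_le_eq card_gt_0_iff)
  have sum_T: "(\<Sum>j<p. f j) = (\<Sum>j\<in>T. f j)" if "\<And>j. j \<notin> T \<Longrightarrow> f j = 0" for f :: "nat \<Rightarrow> real"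
    using that Tp by (intro sum.mono_neutral_right) auto
  have u_sq: "sqnorm p u = Q"
    unfolding sqnorm_def Q_def by (subst sum_T) (auto simp: u_def a_sq)
  have "Q = (\<Sum>r<n. R r * Xmul p X u r)"
    unfolding sum_mult_Xmul Q_def by (subst sum_T) (auto simp: u_def a_def[symmetric] a_sq simp flip: power2_eq_square)
  hence "Q^2 \<le> sqnorm n R * sqnorm n (Xmul p X u)"
    unfolding sqnorm_def by (simp add: Cauchy_Schwarz_ineq_sum)
  also have "\<dots> \<le> sqnorm n R * (phi_max n p X s * (real n * Q))"
    using sqnorm_Xmul_le_phi_max[OF n u_sparse] u_sq by (intro mult_left_mono) (auto simp: sqnorm_nonneg)
  finally have "Q * Q \<le> Q * (phi_max n p X s * real n * sqnorm n R)"
    by (simp add: power2_eq_square mult_ac)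
  moreover have "Q > 0" unfolding Q_def using T finT n lam by (simp add: card_gt_0_iff)
  ultimately have "Q \<le> phi_max n p X s * real n * sqnorm n R" by simp
  thus ?thesis
    using n unfolding Q_def nw_resid_eq R_def by (simp add: power_mult_distrib power2_eq_square field_simps)
qed

lemma nw_resid_ge_cases:
  fixes X :: "nat \<Rightarrow> nat \<Rightarrow> real"
  assumes min: "nw_lasso_min n p X lam g" and n: "n > 0" and p: "p > 0" and lam: "lam > 0"
    and s: "0 < s" "s \<le> s'"
    and pmin: "C_min \<le> phi_min n p X s" and pmax: "phi_max n p X s' \<le> C_max"
  shows "C_min \<le> nw_resid n p X g \<or> real s * lam^2 \<le> C_max * nw_resid n p X g"
proof (cases "card {j \<in> {1..<p}. g j \<noteq> 0} < s")
  case True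
  thus ?thesis using phi_min_le_nw_resid[OF n p True, of X] pmin by simp
next
  case False
  then obtain T where T: "T \<subseteq> {j \<in> {1..<p}. g j \<noteq> 0}" "card T = s"
    by (meson not_less obtain_subset_with_card_n)
  hence "T \<noteq> {}" using s by auto
  hence "real s * lam^2 \<le> phi_max n p X s' * nw_resid n p X g"
    using card_mult_sq_le_phi_max_mult_nw_resid[OF min n lam T(1)] T(2) s by simp
  also have "\<dots> \<le> C_max * nw_resid n p X g"
    using pmax by (intro mult_right_mono) (simp_all add: nw_resid_eq sqnorm_nonneg)
  finally show ?thesis ..
qed

lemma pos_one_div_le_add:
  fixes a b x :: real
  assumes "0 < a" "0 < b" "a \<le> x \<or> b \<le> x"
  shows "0 < x \<and> 1 / x \<le> 1 / a + 1 / b"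
  using assms by (auto simp: frac_le add_increasing add_increasing2)

lemma nw_resid_inverse_bound:
  fixes X :: "nat \<Rightarrow> nat \<Rightarrow> real"
  assumes min: "nw_lasso_min n p X lam g" and n: "0 < n" "n < p" and K: "0 < K" "K dvd n"
    and pos: "C_min > 0" "C_max > 0" "C1 > 0" and lam: "lam \<ge> C1 / sqrt (real n)"
    and pmin: "C_min \<le> phi_min n p X (n div K)" and pmax: "phi_max n p X n \<le> C_max"
  shows "nw_resid n p X g > 0 \<and> 1 / nw_resid n p X g \<le> 1 / C_min + C_max * real K / C1^2"
proof -
  have s: "0 < n div K" "n div K \<le> n" using n K by (auto simp: dvd_imp_le div_greater_zero_iff)
  have bound_pos: "0 < C1 / sqrt (real n)" using pos n by simp
  hence lam_pos: "lam > 0" using lam by linarith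
  have "C1^2 / real n \<le> lam^2"
    using power_mono[OF lam less_imp_le[OF bound_pos], of 2] by (simp add: power_divide)
  hence "real (n div K) * (C1^2 / real n) \<le> real (n div K) * lam^2"
    by (intro mult_left_mono) auto
  moreover have "real (n div K) * (C1^2 / real n) = C1^2 / real K"
    using n K by (simp add: real_of_nat_div)
  ultimately have "C_min \<le> nw_resid n p X g \<or> C1^2 / real K \<le> C_max * nw_resid n p X g"
    using nw_resid_ge_cases[OF min n(1) _ lam_pos s pmin pmax] n by auto
  moreover have "C1^2 / (real K * C_max) \<le> r" if "C1^2 / real K \<le> C_max * r" for r
  proof -
    have "C1^2 / (real K * C_max) = C1^2 / real K / C_max" by simp
    thus ?thesis using that pos(2) by (simp only: pos_divide_le_eq mult.commute)
  qed
  ultimately have "C_min \<le> nw_resid n p X g \<or> C1^2 / (real K * C_max) \<le> nw_resid n p X g"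
    by blast
  from pos_one_div_le_add[OF pos(1) _ this] show ?thesis
    using pos K by (simp add: mult.commute)
qed

lemma inner_prob_bdd_above:
  "prob_space M \<Longrightarrow> bdd_above (measure M ` {A. A \<in> sets M \<and> A \<subseteq> S})"
  by (rule bdd_aboveI[where M=1]) (auto intro: prob_space.prob_le_1)

lemma measure_le_inner_prob:
  "prob_space M \<Longrightarrow> A \<in> sets M \<Longrightarrow> A \<subseteq> S \<Longrightarrow> measure M A \<le> inner_prob M S"
  unfolding inner_prob_def by (rule cSUP_upper[OF _ inner_prob_bdd_above]) auto

lemma inner_prob_le_1: "prob_space M \<Longrightarrow> inner_prob M S \<le> 1"
  unfolding inner_prob_def by (rule cSUP_least) (auto intro: prob_space.prob_le_1)

lemma inner_prob_mono: "prob_space M \<Longrightarrow> S \<subseteq> T \<Longrightarrow> inner_prob M S \<le> inner_prob M T"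
  unfolding inner_prob_def[of M S] by (rule cSUP_least) (auto intro: measure_le_inner_prob)

lemma inner_prob_Int_ge:
  assumes "prob_space M"
  shows "inner_prob M A + inner_prob M B - 1 \<le> inner_prob M (A \<inter> B)"
proof -
  interpret prob_space M by (rule assms)
  have "measure M A' + measure M B' - 1 \<le> inner_prob M (A \<inter> B)"
    if "A' \<in> sets M" "A' \<subseteq> A" "B' \<in> sets M" "B' \<subseteq> B" for A' B'
  proof -
    have "measure M A' + measure M B' = measure M (A' \<union> B') + measure M (A' \<inter> B')"
      using that by (simp add: measure_Un3 fmeasurable_eq_sets)
    moreover have "measure M (A' \<inter> B') \<le> inner_prob M (A \<inter> B)"
      using that by (intro measure_le_inner_prob[OF assms]) auto
    ultimately show ?thesis using prob_le_1[of "A' \<union> B'"] by linarith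
  qed
  hence "inner_prob M A \<le> inner_prob M (A \<inter> B) + 1 - measure M B'"
    if "B' \<in> sets M" "B' \<subseteq> B" for B'
    unfolding inner_prob_def[of M A] by (intro cSUP_least) (use that in force)+
  hence "inner_prob M B \<le> inner_prob M (A \<inter> B) + 1 - inner_prob M A"
    unfolding inner_prob_def[of M B] by (intro cSUP_least) force+
  thus ?thesis by linarith
qed

lemma inner_prob_tendsto_1_if_Int_subset:
  assumes prob: "\<And>n. prob_space (M n)"
    and A: "((\<lambda>n. inner_prob (M n) (A n)) \<longlongrightarrow> 1) F"
    and B: "((\<lambda>n. inner_prob (M n) (B n)) \<longlongrightarrow> 1) F"
    and sub: "eventually (\<lambda>n. A n \<inter> B n \<subseteq> G n) F"
  shows "((\<lambda>n. inner_prob (M n) (G n)) \<longlongrightarrow> 1) F"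
proof (rule tendsto_sandwich)
  show "eventually (\<lambda>n. inner_prob (M n) (A n) + inner_prob (M n) (B n) - 1 \<le> inner_prob (M n) (G n)) F"
    using sub by eventually_elim
      (use inner_prob_Int_ge[OF prob] inner_prob_mono[OF prob] in \<open>meson order_trans\<close>)
  show "eventually (\<lambda>n. inner_prob (M n) (G n) \<le> 1) F"
    by (simp add: inner_prob_le_1[OF prob])
  show "((\<lambda>n. inner_prob (M n) (A n) + inner_prob (M n) (B n) - 1) \<longlongrightarrow> 1) F"
    using tendsto_diff[OF tendsto_add[OF A B] tendsto_const[of 1]] by simp
qed (rule tendsto_const)

theorem lemma1:
  fixes M :: "nat \<Rightarrow> 'a measure"
    and X :: "nat \<Rightarrow> 'a \<Rightarrow> nat \<Rightarrow> nat \<Rightarrow> real"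
    and p :: "nat \<Rightarrow> nat"
    and K :: nat
    and C_min C_max C1 :: real
    and lam :: "nat \<Rightarrow> real"
  defines "F \<equiv> inf sequentially (principal {n. K dvd n})"
  assumes prob: "\<And>n. prob_space (M n)"
    and meas: "\<And>n r j. (\<lambda>\<omega>. X n \<omega> r j) \<in> borel_measurable (M n)"
    and p_gt: "\<And>n. p n > n"
    and K_pos: "K > 0" and Cmin_pos: "C_min > 0" and Cmax_pos: "C_max > 0" and C1_pos: "C1 > 0"
    and A1: "\<And>n. AE \<omega> in M n. general_position n (p n) (X n \<omega>)"
    and A2: "((\<lambda>n. inner_prob (M n)
               {\<omega> \<in> space (M n). phi_min n (p n) (X n \<omega>) (n div K) \<ge> C_min}) \<longlongrightarrow> 1) F"
    and A3: "((\<lambda>n. inner_prob (M n)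
               {\<omega> \<in> space (M n). phi_max n (p n) (X n \<omega>) n \<le> C_max}) \<longlongrightarrow> 1) F"
    and lam_ge: "\<And>n. lam n \<ge> C1 / sqrt (real n)"
  shows "((\<lambda>n. inner_prob (M n)
            {\<omega> \<in> space (M n). \<forall>g. nw_lasso_min n (p n) (X n \<omega>) (lam n) g \<longrightarrow>
                nw_resid n (p n) (X n \<omega>) g > 0 \<and>
                1 / nw_resid n (p n) (X n \<omega>) g \<le> 1 / C_min + C_max * real K / C1^2}) \<longlongrightarrow> 1) F"
proof (rule inner_prob_tendsto_1_if_Int_subset[OF prob A2 A3])
  have "eventually (\<lambda>n. 0 < n \<and> K dvd n) F"
    unfolding F_def eventually_inf_principal by (rule eventually_mono[OF eventually_gt_at_top[of 0]]) auto
  thus "eventually (\<lambda>n. {\<omega> \<in> space (M n). C_min \<le> phi_min n (p n) (X n \<omega>) (n div K)}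
      \<inter> {\<omega> \<in> space (M n). phi_max n (p n) (X n \<omega>) n \<le> C_max}
      \<subseteq> {\<omega> \<in> space (M n). \<forall>g. nw_lasso_min n (p n) (X n \<omega>) (lam n) g \<longrightarrow>
           nw_resid n (p n) (X n \<omega>) g > 0 \<and>
           1 / nw_resid n (p n) (X n \<omega>) g \<le> 1 / C_min + C_max * real K / C1^2}) F"
    by eventually_elim
      (use nw_resid_inverse_bound[OF _ _ p_gt K_pos _ Cmin_pos Cmax_pos C1_pos lam_ge] in blast)
qed

end
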